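(* Let $\Theta\subset\mathbb{R}^p$, let $\mathcal{K}\subset\Theta$ be compact, let $P$ be a probability measure on a measurable space $\Omega_T$, and for each $\theta\in\Theta$ let $(h^\theta_n)_{n\ge1}$ be measurable functions $\Omega_T\to\mathbb{R}$. Assume: (i) for every $\theta\in\Theta$, $h^\theta_n$ converges $P$-a.s. to a finite real number $h^\theta$; (ii) $\theta\mapsto h^\theta$ has a unique minimizer $\theta^*$ over $\Theta$, and $\theta^*\in\mathcal{K}$; (iii) for $P$-a.e. $\omega$ and all $n$ large enough, $\theta\mapsto h^\theta_n(\omega)$ attains its infimum over $\mathcal{K}$ at at least one point $\hat\theta_n(\omega)$; (iv) $\theta\mapsto h^\theta$ is lower semicontinuous on $\Theta$; (v) there is $g_0:\mathbb{R}_+\to\mathbb{R}_+$ with $\lim_{x\to0}g_0(x)=0$ such that for every $\varepsilon>0$ and $\theta\in\mathcal{K}$ there are a finite set $\mathcal{N}(\theta)\subset B(\theta,g_0(\varepsilon))\cap\Theta$ and $r(\theta)>0$ with $P\Big(\limsup_{n\to\infty}\big(\min_{\theta'\in\mathcal{N}(\theta)}h^{\theta'}_n-\inf_{\theta'\in B(\theta,r(\theta))\cap\mathcal{K}}h^{\theta'}_n\big)\ge\varepsilon\Big)=0.$ Then $\hat\theta_n=\mathrm{argmin}_{\theta\in\mathcal{K}}h^\theta_n$ converges $P$-almost surely to $\theta^*$ as $n\to\infty$.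
   Context: $B(\theta,r)$ denotes the open Euclidean ball of center $\theta$ and radius $r$ in $\mathbb{R}^p$. *)

theory Defs
  imports "HOL-Probability.Probability"
begin

definition lsc_on :: "'a::metric_space set \<Rightarrow> ('a \<Rightarrow> real) \<Rightarrow> bool" where
  "lsc_on S f \<longleftrightarrow> (\<forall>x\<in>S. \<forall>e>0. \<forall>\<^sub>F y in at x within S. f x - e < f y)"

end

theory Submission
  imports Defs
begin

text \<open>Fix \<open>\<delta> > 0\<close>. Lower semicontinuity, uniqueness of the minimiser and compactness give
  \<open>H > H \<theta>\<^sup>* + c\<close> on an \<open>\<eta>\<close>-neighbourhood of \<open>K - B(\<theta>\<^sup>*, \<delta>)\<close>. Taking \<open>\<epsilon> < c\<close> with
  \<open>g\<^sub>0 \<epsilon> < \<eta>\<close>, hypothesis (v) covers \<open>K - B(\<theta>\<^sup>*, \<delta>)\<close> by finitely many balls on each of which,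
  eventually, \<open>inf h\<^sub>n\<close> is at least the minimum over a finite net minus \<open>\<epsilon>\<close>, hence above
  \<open>H \<theta>\<^sup>* + c - \<epsilon>\<close>; but \<open>h\<^sub>n \<theta>\<^sup>* \<longrightarrow> H \<theta>\<^sup>* < H \<theta>\<^sup>* + c - \<epsilon>\<close>, so the minimiser eventually avoids
  these balls. Only finitely many parameters are involved, so this happens on a single event of
  full probability; letting \<open>\<delta> \<rightarrow> 0\<close> along a sequence gives a.s. convergence.\<close>

lemma lsc_on_nhd_gt:
  assumes "lsc_on \<Theta> H" "x \<in> \<Theta>" "b < H x"
  obtains d where "d > 0" "\<And>y. y \<in> \<Theta> \<Longrightarrow> dist y x < d \<Longrightarrow> b < H y"
proof -
  from assms have "\<forall>\<^sub>F y in at x within \<Theta>. H x - (H x - b) < H y"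
    unfolding lsc_on_def by (meson diff_gt_0_iff_gt)
  then obtain d where "d > 0" "\<And>y. y \<in> \<Theta> \<Longrightarrow> y \<noteq> x \<Longrightarrow> dist y x < d \<Longrightarrow> b < H y"
    unfolding eventually_at by auto
  with assms(3) show thesis by (metis that)
qed

lemma lsc_on_compact_uniform_gap:
  fixes H :: "'a::metric_space \<Rightarrow> real"
  assumes lsc: "lsc_on \<Theta> H" and C: "compact C" "C \<subseteq> \<Theta>" and gt: "\<And>x. x \<in> C \<Longrightarrow> a < H x"
  obtains \<eta> c where "\<eta> > 0" "c > 0" "\<And>x y. x \<in> C \<Longrightarrow> y \<in> \<Theta> \<Longrightarrow> dist y x < \<eta> \<Longrightarrow> a + c < H y"
proof -
  define b where "b x = (a + H x) / 2" for x
  have "\<forall>x\<in>C. \<exists>d>0. \<forall>y\<in>\<Theta>. dist y x < d \<longrightarrow> b x < H y"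
  proof
    fix x assume "x \<in> C"
    with C gt have "x \<in> \<Theta>" "b x < H x" by (auto simp: b_def)
    with lsc show "\<exists>d>0. \<forall>y\<in>\<Theta>. dist y x < d \<longrightarrow> b x < H y"
      by (metis lsc_on_nhd_gt)
  qed
  then obtain d where d: "\<And>x. x \<in> C \<Longrightarrow> d x > 0"
    "\<And>x y. x \<in> C \<Longrightarrow> y \<in> \<Theta> \<Longrightarrow> dist y x < d x \<Longrightarrow> b x < H y"
    by metis
  have "C \<subseteq> (\<Union>x\<in>C. ball x (d x / 2))" using d(1) by force
  then obtain T where T: "T \<subseteq> C" "finite T" "C \<subseteq> (\<Union>x\<in>T. ball x (d x / 2))"
    using compactE_image[OF C(1), of C "\<lambda>x. ball x (d x / 2)"] by blast
  define \<eta> where "\<eta> = Min (insert 1 ((\<lambda>x. d x / 2) ` T))"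
  define c where "c = Min (insert 1 ((\<lambda>x. b x - a) ` T))"
  have "\<eta> > 0" unfolding \<eta>_def using T d(1) by (subst Min_gr_iff) auto
  moreover have "c > 0" unfolding c_def using T gt by (subst Min_gr_iff) (auto simp: b_def)
  moreover have "a + c < H y" if "x \<in> C" "y \<in> \<Theta>" "dist y x < \<eta>" for x y
  proof -
    obtain z where z: "z \<in> T" "dist z x < d z / 2" using T(3) \<open>x \<in> C\<close> by auto
    have "\<eta> \<le> d z / 2" unfolding \<eta>_def using z T by (intro Min_le) auto
    with that z have "dist y z < d z" using dist_triangle[of y z x] by (simp add: dist_commute)
    with d(2) z T that have "b z < H y" by blast
    moreover have "c \<le> b z - a" unfolding c_def using z T by (intro Min_le) auto
    ultimately show ?thesis by simp
  qed
  ultimately show thesis by (rule that)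
qed

lemma compact_cover_choice:
  fixes C :: "'a::metric_space set"
  assumes "compact C" "\<And>x. x \<in> C \<Longrightarrow> \<exists>N r. r > 0 \<and> Q x N r"
  obtains T r N where "finite T" "T \<subseteq> C" "C \<subseteq> (\<Union>x\<in>T. ball x (r x))"
    "\<And>x. x \<in> T \<Longrightarrow> r x > 0 \<and> Q x (N x) (r x)"
proof -
  obtain N r where Nr: "\<And>x. x \<in> C \<Longrightarrow> r x > 0 \<and> Q x (N x) (r x)"
    using assms(2) by metis
  have "C \<subseteq> (\<Union>x\<in>C. ball x (r x))" using Nr by force
  then obtain T where "T \<subseteq> C" "finite T" "C \<subseteq> (\<Union>x\<in>T. ball x (r x))"
    using compactE_image[OF assms(1), of C "\<lambda>x. ball x (r x)"] by blast
  with Nr show thesis by (intro that[of T r N]) auto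
qed

lemma eventually_gt_of_limsup_Min_minus_INF:
  fixes f :: "'a \<Rightarrow> nat \<Rightarrow> real"
  assumes N: "finite N" "N \<noteq> {}"
    and lim: "\<And>x. x \<in> N \<Longrightarrow> (f x \<longlongrightarrow> L x) sequentially" "\<And>x. x \<in> N \<Longrightarrow> a < L x"
    and gap: "limsup (\<lambda>n. ereal (Min ((\<lambda>x. f x n) ` N)) - (INF x\<in>B. ereal (f x n))) < ereal \<epsilon>"
  shows "\<forall>\<^sub>F n in sequentially. \<forall>y\<in>B. a - \<epsilon> < f y n"
proof -
  have "\<forall>\<^sub>F n in sequentially. \<forall>x\<in>N. a < f x n"
    using N(1) lim by (intro eventually_ball_finite ballI order_tendstoD(1)) auto
  then have "\<forall>\<^sub>F n in sequentially. a < Min ((\<lambda>x. f x n) ` N)"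
    by eventually_elim (use N in auto)
  moreover have "\<forall>\<^sub>F n in sequentially.
      ereal (Min ((\<lambda>x. f x n) ` N)) - (INF x\<in>B. ereal (f x n)) < ereal \<epsilon>"
    using gap by (rule Limsup_lessD)
  ultimately show ?thesis
  proof eventually_elim
    case (elim n)
    show ?case
    proof
      fix y assume "y \<in> B"
      then have "(INF x\<in>B. ereal (f x n)) \<le> ereal (f y n)" by (rule INF_lower)
      then show "a - \<epsilon> < f y n"
        using elim by (cases "INF x\<in>B. ereal (f x n)") auto
    qed
  qed
qed

lemma eventually_argmin_near:
  fixes f :: "'a::metric_space \<Rightarrow> nat \<Rightarrow> real" and x :: "nat \<Rightarrow> 'a"
  assumes T: "finite T" "K - ball s \<delta> \<subseteq> (\<Union>\<theta>\<in>T. ball \<theta> (r \<theta>))"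
    and N: "\<And>\<theta>. \<theta> \<in> T \<Longrightarrow> finite (N \<theta>)" "\<And>\<theta>. \<theta> \<in> T \<Longrightarrow> N \<theta> \<noteq> {}"
    and lim: "\<And>\<theta>'. \<theta>' \<in> \<Union>(N ` T) \<Longrightarrow> f \<theta>' \<longlonglongrightarrow> L \<theta>'"
      "\<And>\<theta>'. \<theta>' \<in> \<Union>(N ` T) \<Longrightarrow> a < L \<theta>'"
    and gap: "\<And>\<theta>. \<theta> \<in> T \<Longrightarrow> limsup (\<lambda>n. ereal (Min ((\<lambda>\<theta>'. f \<theta>' n) ` N \<theta>))
                 - (INF \<theta>'\<in>ball \<theta> (r \<theta>) \<inter> K. ereal (f \<theta>' n))) < ereal \<epsilon>"
    and s: "s \<in> K" "f s \<longlonglongrightarrow> L s" "L s < a - \<epsilon>"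
    and argmin: "\<forall>\<^sub>F n in sequentially. x n \<in> K \<and> (\<forall>y\<in>K. f (x n) n \<le> f y n)"
  shows "\<forall>\<^sub>F n in sequentially. dist (x n) s < \<delta>"
proof -
  have "\<forall>\<^sub>F n in sequentially. \<forall>y\<in>ball \<theta> (r \<theta>) \<inter> K. a - \<epsilon> < f y n" if "\<theta> \<in> T" for \<theta>
    using N(1,2)[OF that] lim gap[OF that] that
    by (intro eventually_gt_of_limsup_Min_minus_INF[of "N \<theta>" f L]) auto
  then have "\<forall>\<^sub>F n in sequentially. \<forall>\<theta>\<in>T. \<forall>y\<in>ball \<theta> (r \<theta>) \<inter> K. a - \<epsilon> < f y n"
    using T(1) by (intro eventually_ball_finite) auto
  moreover have "\<forall>\<^sub>F n in sequentially. f s n < a - \<epsilon>"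
    using s by (intro order_tendstoD(2))
  ultimately show ?thesis using argmin
  proof eventually_elim
    case (elim n)
    show ?case
    proof (rule ccontr)
      assume "\<not> dist (x n) s < \<delta>"
      with elim(3) T(2) obtain \<theta> where "\<theta> \<in> T" "x n \<in> ball \<theta> (r \<theta>) \<inter> K"
        by (auto simp: dist_commute)
      with elim have "a - \<epsilon> < f (x n) n" "f (x n) n \<le> f s n" using s(1) by auto
      with elim(2) show False by simp
    qed
  qed
qed

lemma at_right_0_obtain_small:
  fixes g :: "real \<Rightarrow> real"
  assumes "(g \<longlongrightarrow> 0) (at_right 0)" "\<eta> > 0" "c > 0"
  obtains \<epsilon> where "0 < \<epsilon>" "\<epsilon> < c" "g \<epsilon> < \<eta>"
proof -
  have "\<forall>\<^sub>F x in at_right 0. g x < \<eta> \<and> x < c \<and> 0 < x"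
    using order_tendstoD(2)[OF assms(1,2)] order_tendstoD(2)[OF tendsto_ident_at[of 0 "{0<..}"] assms(3)]
      eventually_at_right_less[of "0::real"]
    by (intro eventually_conj)
  then show thesis
    using that eventually_happens trivial_limit_at_right_real by blast
qed

lemma AE_tendsto_if_AE_eventually_dist_less:
  assumes "\<And>\<delta>. \<delta> > 0 \<Longrightarrow> AE \<omega> in M. \<forall>\<^sub>F n in sequentially. dist (X n \<omega>) l < \<delta>"
  shows "AE \<omega> in M. (\<lambda>n. X n \<omega>) \<longlonglongrightarrow> l"
proof -
  have "AE \<omega> in M. \<forall>m::nat. \<forall>\<^sub>F n in sequentially. dist (X n \<omega>) l < inverse (Suc m)"
    unfolding AE_all_countable by (intro allI assms) simp
  then show ?thesis
  proof eventually_elim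
    case (elim \<omega>)
    show ?case unfolding tendsto_iff
    proof (intro allI impI)
      fix e :: real assume "e > 0"
      then obtain m where m: "inverse (Suc m) < e" using reals_Archimedean by blast
      show "\<forall>\<^sub>F n in sequentially. dist (X n \<omega>) l < e"
        using elim[rule_format, of m] by eventually_elim (use m in auto)
    qed
  qed
qed

lemma AE_eventually_argmin_near:
  fixes h :: "'a::metric_space \<Rightarrow> nat \<Rightarrow> 'w \<Rightarrow> real" and x :: "nat \<Rightarrow> 'w \<Rightarrow> 'a"
  assumes K: "compact K"
    and conv: "\<And>\<theta>. \<theta> \<in> \<Theta> \<Longrightarrow> AE \<omega> in M. (\<lambda>n. h \<theta> n \<omega>) \<longlonglongrightarrow> H \<theta>"
    and cover: "\<And>\<theta>. \<theta> \<in> K - ball s \<delta> \<Longrightarrow> \<exists>N r. finite N \<and> N \<noteq> {} \<and> N \<subseteq> \<Theta> \<and>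
       (\<forall>\<theta>'\<in>N. a < H \<theta>') \<and> r > 0 \<and>
       (AE \<omega> in M. limsup (\<lambda>n. ereal (Min ((\<lambda>\<theta>'. h \<theta>' n \<omega>) ` N))
                     - (INF \<theta>'\<in>ball \<theta> r \<inter> K. ereal (h \<theta>' n \<omega>))) < ereal \<epsilon>)"
    and s: "s \<in> K" "s \<in> \<Theta>" "H s < a - \<epsilon>"
    and argmin: "AE \<omega> in M. \<forall>\<^sub>F n in sequentially.
                   x n \<omega> \<in> K \<and> (\<forall>y\<in>K. h (x n \<omega>) n \<omega> \<le> h y n \<omega>)"
  shows "AE \<omega> in M. \<forall>\<^sub>F n in sequentially. dist (x n \<omega>) s < \<delta>"
proof -
  define admissible where "admissible \<theta> N r \<longleftrightarrow>
      finite N \<and> N \<noteq> {} \<and> N \<subseteq> \<Theta> \<and> (\<forall>\<theta>'\<in>N. a < H \<theta>') \<and>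
      (AE \<omega> in M. limsup (\<lambda>n. ereal (Min ((\<lambda>\<theta>'. h \<theta>' n \<omega>) ` N))
                  - (INF \<theta>'\<in>ball \<theta> r \<inter> K. ereal (h \<theta>' n \<omega>))) < ereal \<epsilon>)" for \<theta> N r
  have admissible_nbhd: "\<exists>N r. r > 0 \<and> admissible \<theta> N r" if "\<theta> \<in> K - ball s \<delta>" for \<theta>
    using cover[OF that] unfolding admissible_def by blast
  obtain T r N where T: "finite T" "T \<subseteq> K - ball s \<delta>" "K - ball s \<delta> \<subseteq> (\<Union>\<theta>\<in>T. ball \<theta> (r \<theta>))"
    and adm: "\<And>\<theta>. \<theta> \<in> T \<Longrightarrow> r \<theta> > 0 \<and> admissible \<theta> (N \<theta>) (r \<theta>)"
    using compact_cover_choice[where Q = admissible, OF compact_diff[OF K open_ball[of s \<delta>]] admissible_nbhd]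
    by blast
  have N: "finite (N \<theta>)" "N \<theta> \<noteq> {}" "N \<theta> \<subseteq> \<Theta>" "\<And>\<theta>'. \<theta>' \<in> N \<theta> \<Longrightarrow> a < H \<theta>'"
    if "\<theta> \<in> T" for \<theta>
    using adm[OF that] unfolding admissible_def by blast+
  have gap: "AE \<omega> in M. limsup (\<lambda>n. ereal (Min ((\<lambda>\<theta>'. h \<theta>' n \<omega>) ` N \<theta>))
      - (INF \<theta>'\<in>ball \<theta> (r \<theta>) \<inter> K. ereal (h \<theta>' n \<omega>))) < ereal \<epsilon>" if "\<theta> \<in> T" for \<theta>
    using adm[OF that] unfolding admissible_def by blast
  have "finite (\<Union>(N ` T))" "\<Union>(N ` T) \<subseteq> \<Theta>" using T(1) N(1,3) by blast+
  then have "AE \<omega> in M. \<forall>\<theta>'\<in>\<Union>(N ` T). (\<lambda>n. h \<theta>' n \<omega>) \<longlonglongrightarrow> H \<theta>'"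
    using conv by (intro AE_finite_allI) auto
  moreover have "AE \<omega> in M. \<forall>\<theta>\<in>T. limsup (\<lambda>n. ereal (Min ((\<lambda>\<theta>'. h \<theta>' n \<omega>) ` N \<theta>))
                  - (INF \<theta>'\<in>ball \<theta> (r \<theta>) \<inter> K. ereal (h \<theta>' n \<omega>))) < ereal \<epsilon>"
    using T(1) gap by (rule AE_finite_allI)
  moreover have "AE \<omega> in M. (\<lambda>n. h s n \<omega>) \<longlonglongrightarrow> H s" using conv s(2) .
  ultimately show ?thesis using argmin
  proof eventually_elim
    case (elim \<omega>)
    show ?case
      using elim s N(4)
      by (intro eventually_argmin_near[where f = "\<lambda>\<theta> n. h \<theta> n \<omega>", OF T(1,3) N(1,2)]) auto
  qed
qed

theorem lemma4:
  fixes \<Theta> K :: "'a::euclidean_space set"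
    and P :: "'w measure"
    and h :: "'a \<Rightarrow> nat \<Rightarrow> 'w \<Rightarrow> real"
    and H :: "'a \<Rightarrow> real"
    and \<theta>star :: 'a
    and g0 :: "real \<Rightarrow> real"
    and \<theta>hat :: "nat \<Rightarrow> 'w \<Rightarrow> 'a"
  assumes prob: "prob_space P"
    and K_compact: "compact K" and K_sub: "K \<subseteq> \<Theta>"
    and h_meas: "\<And>\<theta> n. \<theta> \<in> \<Theta> \<Longrightarrow> h \<theta> n \<in> borel_measurable P"
    and conv: "\<And>\<theta>. \<theta> \<in> \<Theta> \<Longrightarrow> AE \<omega> in P. (\<lambda>n. h \<theta> n \<omega>) \<longlonglongrightarrow> H \<theta>"
    and star_in: "\<theta>star \<in> \<Theta>" "\<theta>star \<in> K"
    and star_unique: "\<And>\<theta>. \<theta> \<in> \<Theta> \<Longrightarrow> \<theta> \<noteq> \<theta>star \<Longrightarrow> H \<theta>star < H \<theta>"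
    and argmin_exists: "AE \<omega> in P. \<forall>\<^sub>F n in sequentially.
                          \<exists>\<theta>\<in>K. \<forall>\<theta>'\<in>K. h \<theta> n \<omega> \<le> h \<theta>' n \<omega>"
    and lsc: "lsc_on \<Theta> H"
    and g0_nonneg: "\<And>x. x \<ge> 0 \<Longrightarrow> g0 x \<ge> 0"
    and g0_lim: "(g0 \<longlongrightarrow> 0) (at_right 0)"
    and cover: "\<And>\<epsilon> \<theta>. \<epsilon> > 0 \<Longrightarrow> \<theta> \<in> K \<Longrightarrow>
       \<exists>N r. finite N \<and> N \<noteq> {} \<and> N \<subseteq> ball \<theta> (g0 \<epsilon>) \<inter> \<Theta> \<and> r > 0 \<and>
         (AE \<omega> in P. limsup (\<lambda>n. ereal (Min ((\<lambda>\<theta>'. h \<theta>' n \<omega>) ` N))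
                       - (INF \<theta>'\<in>ball \<theta> r \<inter> K. ereal (h \<theta>' n \<omega>))) < ereal \<epsilon>)"
    and \<theta>hat_argmin: "AE \<omega> in P. \<forall>\<^sub>F n in sequentially.
                        \<theta>hat n \<omega> \<in> K \<and> (\<forall>\<theta>'\<in>K. h (\<theta>hat n \<omega>) n \<omega> \<le> h \<theta>' n \<omega>)"
  shows "AE \<omega> in P. (\<lambda>n. \<theta>hat n \<omega>) \<longlonglongrightarrow> \<theta>star"
proof (rule AE_tendsto_if_AE_eventually_dist_less)
  fix \<delta> :: real assume "\<delta> > 0"
  have C: "compact (K - ball \<theta>star \<delta>)" "K - ball \<theta>star \<delta> \<subseteq> \<Theta>"
    "\<And>\<theta>. \<theta> \<in> K - ball \<theta>star \<delta> \<Longrightarrow> H \<theta>star < H \<theta>"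
    using K_compact K_sub \<open>\<delta> > 0\<close> by (auto simp: compact_diff intro!: star_unique)
  obtain \<eta> c where "\<eta> > 0" "c > 0" and sep: "\<And>\<theta> \<theta>'. \<theta> \<in> K - ball \<theta>star \<delta> \<Longrightarrow> \<theta>' \<in> \<Theta> \<Longrightarrow>
      dist \<theta>' \<theta> < \<eta> \<Longrightarrow> H \<theta>star + c < H \<theta>'"
    using lsc_on_compact_uniform_gap[OF lsc C] by blast
  obtain \<epsilon> where \<epsilon>: "0 < \<epsilon>" "\<epsilon> < c" "g0 \<epsilon> < \<eta>"
    using at_right_0_obtain_small[OF g0_lim \<open>\<eta> > 0\<close> \<open>c > 0\<close>] .
  show "AE \<omega> in P. \<forall>\<^sub>F n in sequentially. dist (\<theta>hat n \<omega>) \<theta>star < \<delta>"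
  proof (rule AE_eventually_argmin_near[where a = "H \<theta>star + c" and \<epsilon> = \<epsilon>,
        OF K_compact conv _ star_in(2,1) _ \<theta>hat_argmin])
    fix \<theta> assume \<theta>: "\<theta> \<in> K - ball \<theta>star \<delta>"
    then obtain N r where N: "finite N" "N \<noteq> {}" "N \<subseteq> ball \<theta> (g0 \<epsilon>) \<inter> \<Theta>" "r > 0"
      and "AE \<omega> in P. limsup (\<lambda>n. ereal (Min ((\<lambda>\<theta>'. h \<theta>' n \<omega>) ` N))
                     - (INF \<theta>'\<in>ball \<theta> r \<inter> K. ereal (h \<theta>' n \<omega>))) < ereal \<epsilon>"
      using cover[OF \<open>0 < \<epsilon>\<close>] by blast
    moreover have "\<forall>\<theta>'\<in>N. H \<theta>star + c < H \<theta>'"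
      using N(3) \<epsilon>(3) by (auto intro!: sep[OF \<theta>] simp: dist_commute)
    ultimately show "\<exists>N r. finite N \<and> N \<noteq> {} \<and> N \<subseteq> \<Theta> \<and> (\<forall>\<theta>'\<in>N. H \<theta>star + c < H \<theta>') \<and>
      r > 0 \<and> (AE \<omega> in P. limsup (\<lambda>n. ereal (Min ((\<lambda>\<theta>'. h \<theta>' n \<omega>) ` N))
                     - (INF \<theta>'\<in>ball \<theta> r \<inter> K. ereal (h \<theta>' n \<omega>))) < ereal \<epsilon>)"
      by blast
  next
    show "H \<theta>star < H \<theta>star + c - \<epsilon>" using \<epsilon>(2) by linarith
  qed
qed

end
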